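(* Let $d\in\mathbb{N}$ and $0<r<1/d$. Then the set $B(1,r)^d\subseteq\mathbb{C}$ is convex.
   Context: For $a\in\mathbb{C}$ and $r>0$, $B(a,r)$ denotes the open disk of radius $r$ centred at $a$, and $B(a,r)^d:=\{b_1b_2\cdots b_d : b_i\in B(a,r)\text{ for } i=1,\dots,d\}$ (the set of products of $d$ elements of the disk). *)

theory Defs
  imports "HOL-Analysis.Analysis"
begin

definition disk_pow :: "complex \<Rightarrow> real \<Rightarrow> nat \<Rightarrow> complex set" where
  "disk_pow a r d = {(\<Prod>i<d. b i) | b. \<forall>i<d. b i \<in> ball a r}"

end

theory Submission
  imports Defs
begin

text \<open>
  For \<open>d r < 1\<close> every point of the disk \<open>B = B(1,r)\<close> has argument of modulus less than
  \<open>\<pi>/(2d)\<close>, so \<open>w \<mapsto> w^d\<close> is injective on \<open>B\<close>, with the principal \<open>d\<close>-th root as inverse.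
  The product \<open>b\<^sub>1\<cdots>b\<^sub>d\<close> of points of \<open>B\<close> is the \<open>d\<close>-th power of the geometric mean
  \<open>exp ((\<Sum> Ln b\<^sub>i) / d)\<close>, which lies in \<open>B\<close> because \<open>Ln ` B\<close> is convex for \<open>r \<le> 1/2\<close>;
  hence \<open>B^d = {w^d | w \<in> B}\<close>.

  Both \<open>Ln ` B\<close> and \<open>{w^d | w \<in> B}\<close> are strict sublevel sets \<open>{\<Phi> < r\<^sup>2}\<close> of
  \<open>\<Phi> = |F - 1|\<^sup>2\<close> in a convex domain, with \<open>F = exp\<close> resp. the principal \<open>d\<close>-th root.
  These \<open>F\<close> satisfy \<open>F' = \<mu> F\<close>, \<open>\<mu>' = (k - 1) \<mu>\<^sup>2\<close>, and on any segment where \<open>\<Phi> \<le> r\<^sup>2\<close>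
  the bound \<open>|k| |F - 1| \<le> |F|\<close> makes \<open>\<Phi>\<close> convex. Deforming one endpoint of a segment along a
  path inside the sublevel set, the first segment touching level \<open>r\<^sup>2\<close> would be one on which
  \<open>\<Phi>\<close> is convex, hence below its endpoint values, a contradiction.
\<close>

lemma Re_cnj_mult_self: "Re (cnj z * z) = (cmod z)^2"
  using cmod_power2[of z] by (simp add: power2_eq_square)

lemma convex_on_norm_diff_one_sq:
  fixes e m :: "real \<Rightarrow> complex" and k :: complex and I :: "real set"
  assumes "convex I"
    and e: "\<And>t. t \<in> I \<Longrightarrow> (e has_vector_derivative m t * e t) (at t)"
    and m: "\<And>t. t \<in> I \<Longrightarrow> (m has_vector_derivative (k - 1) * (m t)^2) (at t)"
    and bound: "\<And>t. t \<in> I \<Longrightarrow> cmod k * cmod (e t - 1) \<le> cmod (e t)"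
  shows "convex_on I (\<lambda>t. (cmod (e t - 1))^2)"
proof (rule f''_ge0_imp_convex[OF \<open>convex I\<close>])
  have e1: "((\<lambda>t. e t - 1) has_vector_derivative m t * e t) (at t)" if "t \<in> I" for t
    using has_vector_derivative_diff[OF e[OF that] has_vector_derivative_const] by simp
  fix t assume t: "t \<in> I"
  from has_field_derivative_Re[OF has_vector_derivative_mult[OF has_vector_derivative_cnj[OF e1[OF t]] e1[OF t]]]
  show "((\<lambda>t. (cmod (e t - 1))^2) has_real_derivative 2 * Re (cnj (e t - 1) * (m t * e t))) (at t)"
    unfolding Re_cnj_mult_self by (rule DERIV_cong) (simp add: algebra_simps)
  have "((\<lambda>t. m t * e t) has_vector_derivative k * (m t)^2 * e t) (at t)"
    using has_vector_derivative_mult[OF m[OF t] e[OF t]]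
    by (simp add: algebra_simps power2_eq_square)
  from DERIV_cmult[OF has_field_derivative_Re[OF has_vector_derivative_mult[OF has_vector_derivative_cnj[OF e1[OF t]] this]], of 2]
  show "((\<lambda>t. 2 * Re (cnj (e t - 1) * (m t * e t))) has_real_derivative
          2 * (cmod (m t * e t))^2 + 2 * Re (cnj (e t - 1) * (k * (m t)^2 * e t))) (at t)"
    by (rule DERIV_cong) (simp only: plus_complex.sel Re_cnj_mult_self distrib_left add.commute)
  have "\<bar>Re (cnj (e t - 1) * (k * (m t)^2 * e t))\<bar> \<le> cmod (cnj (e t - 1) * (k * (m t)^2 * e t))"
    by (rule abs_Re_le_cmod)
  also have "\<dots> = cmod (e t - 1) * cmod k * (cmod (m t))^2 * cmod (e t)"
    by (simp only: norm_mult norm_power complex_mod_cnj mult.assoc)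
  also have "\<dots> \<le> (cmod (m t))^2 * (cmod (e t))^2"
    using mult_right_mono[OF bound[OF t], of "(cmod (m t))^2 * cmod (e t)"]
    by (simp add: power2_eq_square algebra_simps)
  finally show "0 \<le> 2 * (cmod (m t * e t))^2 + 2 * Re (cnj (e t - 1) * (k * (m t)^2 * e t))"
    by (simp add: norm_mult power_mult_distrib abs_le_iff)
qed

lemma convex_on_norm_diff_one_sq_segment:
  fixes F \<mu> :: "complex \<Rightarrow> complex" and x y k :: complex
  assumes F: "\<And>w. w \<in> closed_segment x y \<Longrightarrow> (F has_field_derivative \<mu> w * F w) (at w)"
    and \<mu>: "\<And>w. w \<in> closed_segment x y \<Longrightarrow> (\<mu> has_field_derivative (k - 1) * (\<mu> w)^2) (at w)"
    and bound: "\<And>w. w \<in> closed_segment x y \<Longrightarrow> cmod k * cmod (F w - 1) \<le> cmod (F w)"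
  shows "convex_on {0..1} (\<lambda>t. (cmod (F ((1 - t) *\<^sub>R x + t *\<^sub>R y) - 1))^2)"
proof -
  define P where "P t = (1 - t) *\<^sub>R x + t *\<^sub>R y" for t :: real
  have P_seg: "P t \<in> closed_segment x y" if "t \<in> {0..1}" for t
    using that by (auto simp: closed_segment_def P_def)
  have P: "(P has_vector_derivative y - x) (at t)" for t
    unfolding P_def by (auto intro!: derivative_eq_intros)
  have "convex_on {0..1} (\<lambda>t. (cmod (F (P t) - 1))^2)"
  proof (rule convex_on_norm_diff_one_sq[where m = "\<lambda>t. (y - x) * \<mu> (P t)" and k = k])
    fix t :: real assume t: "t \<in> {0..1}"
    show "((\<lambda>t. F (P t)) has_vector_derivative (y - x) * \<mu> (P t) * F (P t)) (at t)"
      using field_vector_diff_chain_at[OF P F[OF P_seg[OF t]]] by (simp add: o_def mult.assoc)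
    show "((\<lambda>t. (y - x) * \<mu> (P t)) has_vector_derivative (k - 1) * ((y - x) * \<mu> (P t))^2) (at t)"
      using has_vector_derivative_mult_right[OF field_vector_diff_chain_at[OF P \<mu>[OF P_seg[OF t]]], of "y - x"]
      by (simp add: o_def power_mult_distrib algebra_simps power2_eq_square)
    show "cmod k * cmod (F (P t) - 1) \<le> cmod (F (P t))"
      by (rule bound[OF P_seg[OF t]])
  qed simp
  then show ?thesis
    by (simp add: P_def)
qed

lemma least_crossing_parameter:
  fixes G :: "real \<times> real \<Rightarrow> real"
  assumes G: "continuous_on ({0..1} \<times> {0..1}) G"
    and start: "\<And>t. t \<in> {0..1} \<Longrightarrow> G (0, t) \<le> c"
    and cross: "s1 \<in> {0..1}" "t1 \<in> {0..1}" "c \<le> G (s1, t1)"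
  obtains s0 t0 where "s0 \<in> {0..1}" "t0 \<in> {0..1}" "c \<le> G (s0, t0)"
    "\<And>t. t \<in> {0..1} \<Longrightarrow> G (s0, t) \<le> c"
proof -
  define K where "K = {z \<in> {0..1} \<times> {0..1}. c \<le> G z}"
  have "closed K"
    unfolding K_def by (intro continuous_on_closed_Collect_le[OF continuous_on_const G] closed_Times) auto
  moreover have "bounded K"
    by (rule bounded_subset[of "{0..1} \<times> {0..1}"]) (auto simp: K_def bounded_Times)
  ultimately have "compact K"
    by (simp add: compact_eq_bounded_closed)
  moreover have "(s1, t1) \<in> K"
    using cross by (simp add: K_def)
  ultimately obtain s0 where s0: "s0 \<in> fst ` K" and least: "\<And>s. s \<in> fst ` K \<Longrightarrow> s0 \<le> s"
    using compact_attains_inf[of "fst ` K"] compact_continuous_image[OF continuous_on_fst[OF continuous_on_id]]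
    by blast
  then obtain t0 where t0: "(s0, t0) \<in> K" by force
  have "G (s0, t) \<le> c" if t: "t \<in> {0..1}" for t
  proof (cases "s0 = 0")
    case True
    then show ?thesis using start t by simp
  next
    case False
    then have "0 < s0" using t0 by (simp add: K_def)
    have "G (s, t) \<le> c" if "s \<in> {0..<s0}" for s
      using least[of s] that t t0 unfolding K_def by force
    moreover have "continuous_on {0..s0} (\<lambda>s. G (s, t))"
      using t t0 unfolding K_def
      by (intro continuous_on_compose2[OF G]) (auto intro: continuous_intros)
    ultimately show ?thesis
      using continuous_le_on_closure[of "{0..<s0}" "\<lambda>s. G (s, t)" s0 c] \<open>0 < s0\<close> by simp
  qed
  with t0 that show ?thesis unfolding K_def by blast
qed

lemma convex_sublevel_by_continuation:
  fixes \<Phi> :: "'a::real_normed_vector \<Rightarrow> real"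
  assumes U: "convex U" and cont: "continuous_on U \<Phi>"
    and conn: "path_connected {x \<in> U. \<Phi> x < c}"
    and seg: "\<And>x y. x \<in> U \<Longrightarrow> y \<in> U \<Longrightarrow> (\<forall>t\<in>{0..1}. \<Phi> ((1 - t) *\<^sub>R x + t *\<^sub>R y) \<le> c)
              \<Longrightarrow> convex_on {0..1} (\<lambda>t. \<Phi> ((1 - t) *\<^sub>R x + t *\<^sub>R y))"
  shows "convex {x \<in> U. \<Phi> x < c}"
  unfolding convex_alt
proof (intro ballI allI impI)
  fix x y and u :: real
  assume x: "x \<in> {x \<in> U. \<Phi> x < c}" and y: "y \<in> {x \<in> U. \<Phi> x < c}" and u: "0 \<le> u \<and> u \<le> 1"
  obtain g where g: "path g" "path_image g \<subseteq> {x \<in> U. \<Phi> x < c}" "pathstart g = x" "pathfinish g = y"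
    using conn x y unfolding path_connected_def by blast
  have gU: "g s \<in> U" and g_below: "\<Phi> (g s) < c" if "s \<in> {0..1}" for s
    using g(2) that by (auto simp: path_image_def image_subset_iff)
  define h where "h = (\<lambda>z. (1 - snd z) *\<^sub>R x + snd z *\<^sub>R g (fst z))"
  define G where "G = (\<lambda>z. \<Phi> (h z))"
  have hU: "h (s, t) \<in> U" if "s \<in> {0..1}" "t \<in> {0..1}" for s t
    using convexD_alt[OF U _ gU[OF that(1)]] x that(2) by (auto simp: h_def)
  have "continuous_on ({0..1} \<times> {0..1}) (\<lambda>z. g (fst z))"
    using g(1) unfolding path_def
    by (rule continuous_on_compose2) (auto intro: continuous_intros)
  then have "continuous_on ({0..1} \<times> {0..1}) h"
    unfolding h_def by (intro continuous_intros)
  then have G: "continuous_on ({0..1} \<times> {0..1}) G"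
    unfolding G_def by (rule continuous_on_compose2[OF cont]) (auto intro: hU)
  have at_one: "G (1, t) < c" if t: "t \<in> {0..1}" for t
  proof (rule ccontr)
    assume "\<not> G (1, t) < c"
    moreover have "G (0, t') \<le> c" if "t' \<in> {0..1}" for t'
      using x g(3) by (simp add: G_def h_def pathstart_def scaleR_diff_left)
    ultimately obtain s0 t0 where s0: "s0 \<in> {0..1}" "t0 \<in> {0..1}" "c \<le> G (s0, t0)"
        and below: "\<And>t. t \<in> {0..1} \<Longrightarrow> G (s0, t) \<le> c"
      using least_crossing_parameter[OF G, of c 1 t] t by auto
    have "convex_on {0..1} (\<lambda>t. G (s0, t))"
      using seg[OF _ gU[OF s0(1)]] below x by (simp add: G_def h_def)
    then have "G (s0, t0) \<le> max (G (s0, 0)) (G (s0, 1))"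
      using convex_on_le_max s0(2) by blast
    also have "\<dots> < c"
      using x g_below[OF s0(1)] by (simp add: G_def h_def)
    finally show False using s0(3) by simp
  qed
  show "(1 - u) *\<^sub>R x + u *\<^sub>R y \<in> {x \<in> U. \<Phi> x < c}"
    using at_one[of u] hU[of 1 u] u g(4) unfolding G_def h_def pathfinish_def by auto
qed

lemma power2_less_power2_iff_less:
  fixes a b :: real
  assumes "0 \<le> a" "0 \<le> b"
  shows "a^2 < b^2 \<longleftrightarrow> a < b"
  using assms power2_less_imp_less[of a b] power_strict_mono[of a b 2] by auto

lemma Re_pos_if_in_ball_one:
  fixes w :: complex
  assumes "w \<in> ball 1 r" "r \<le> 1"
  shows "0 < Re w"
  using abs_Re_le_cmod[of "w - 1"] assms by (simp add: dist_norm norm_minus_commute)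

lemma Im_div_Re_sq_le:
  fixes w :: complex
  assumes w: "cmod (w - 1) < r" and r: "r \<le> 1"
  shows "(Im w / Re w)^2 * (1 - r^2) \<le> r^2"
proof -
  define a b where "a = Re w" and "b = Im w"
  have "\<bar>a - 1\<bar> < r"
    using abs_Re_le_cmod[of "w - 1"] w by (simp add: a_def)
  then have a: "0 < a" using r by linarith
  have "(a - 1)^2 + b^2 < r^2"
    using power_strict_mono[OF w norm_ge_zero, of 2] cmod_power2[of "w - 1"] by (simp add: a_def b_def)
  moreover have "0 \<le> r"
    using w norm_ge_zero[of "w - 1"] by linarith
  with r have "r^2 \<le> 1"
    by (simp add: power_le_one)
  ultimately have "b^2 * (1 - r^2) \<le> (r^2 - (a - 1)^2) * (1 - r^2)"
    by (intro mult_right_mono) auto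
  also have "\<dots> = r^2 * a^2 - (a - (1 - r^2))^2"
    by (simp add: power2_eq_square algebra_simps)
  also have "\<dots> \<le> r^2 * a^2" by simp
  finally have "b^2 * (1 - r^2) / a^2 \<le> r^2"
    using a by (simp add: divide_le_eq)
  then show ?thesis
    by (simp add: a_def b_def power_divide)
qed

lemma abs_of_nat_mult_Arg_less:
  fixes w :: complex
  assumes w: "cmod (w - 1) < r" and dr: "real d * r < 1"
  shows "\<bar>real d * Arg w\<bar> < pi / 2"
proof -
  have Re_w: "\<bar>Re w - 1\<bar> < r"
    using abs_Re_le_cmod[of "w - 1"] w by simp
  have r: "0 < r"
    using w norm_ge_zero[of "w - 1"] by linarith
  consider "d = 0" | "d = 1" | "2 \<le> d" by linarith
  then show ?thesis
  proof cases
    case 1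
    then show ?thesis by simp
  next
    case 2
    then have "0 < Re w" using Re_w dr by simp
    then show ?thesis using 2 Arg_Re_pos by simp
  next
    case 3
    then have "2 * r \<le> real d * r"
      using r by (intro mult_right_mono) auto
    then have "2 * r < 1" using dr by linarith
    then have "0 < Re w" and "r^2 \<le> 1/4"
      using Re_w r power_mono[of "2 * r" 1 2] by (auto simp: power_mult_distrib)
    txt \<open>\<open>|Arg w| \<le> |tan (Arg w)|\<close>, and on the disk \<open>tan\<^sup>2 (Arg w) \<le> r\<^sup>2 / (1 - r\<^sup>2) < 4 / (3 d\<^sup>2)\<close>.\<close>
    define y where "y = Im w / Re w"
    have "(real d * y)^2 * (3/4) \<le> (real d * y)^2 * (1 - r^2)"
      using \<open>r^2 \<le> 1/4\<close> by (intro mult_left_mono) auto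
    also have "\<dots> = (real d)^2 * (y^2 * (1 - r^2))"
      by (simp add: power_mult_distrib)
    also have "\<dots> \<le> (real d)^2 * r^2"
      using Im_div_Re_sq_le[OF w] \<open>2 * r < 1\<close> by (intro mult_left_mono) (auto simp: y_def)
    also have "\<dots> < 1"
      using power_strict_mono[of "real d * r" 1 2] dr r by (simp add: power_mult_distrib)
    finally have "(real d * y)^2 < (3/2)^2"
      by (simp add: power2_eq_square)
    then have "\<bar>real d * y\<bar> < 3/2"
      using power2_less_imp_less[of "\<bar>real d * y\<bar>" "3/2"] by simp
    moreover have "\<bar>real d * Arg w\<bar> \<le> \<bar>real d * y\<bar>"
      unfolding abs_mult arg_conv_arctan[OF \<open>0 < Re w\<close>] y_def[symmetric]
      by (intro mult_left_mono abs_arctan_le) auto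
    ultimately show ?thesis using pi_gt3 by linarith
  qed
qed

definition principal_root :: "nat \<Rightarrow> complex \<Rightarrow> complex" where
  "principal_root d z = exp (Ln z / of_nat d)"

lemma has_field_derivative_principal_root:
  assumes "w \<notin> \<real>\<^sub>\<le>\<^sub>0" "d \<noteq> 0"
  shows "(principal_root d has_field_derivative principal_root d w / (of_nat d * w)) (at w)"
proof -
  have "w \<noteq> 0" using assms by auto
  have "((\<lambda>w. exp (Ln w / of_nat d)) has_field_derivative exp (Ln w / of_nat d) * (inverse w / of_nat d)) (at w)"
    using assms by (auto intro!: derivative_eq_intros)
  then show ?thesis
    using \<open>w \<noteq> 0\<close> \<open>d \<noteq> 0\<close> by (simp add: principal_root_def[abs_def] field_simps)
qed

lemma power_principal_root:
  assumes "p \<noteq> 0" "d \<noteq> 0"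
  shows "principal_root d p ^ d = p"
  using assms by (simp add: principal_root_def exp_of_nat_mult[symmetric])

lemma
  fixes w :: complex
  assumes w: "cmod (w - 1) < r" and dr: "real d * r < 1" and d: "d \<noteq> 0"
  shows Re_power_gt_zero_near_one: "0 < Re (w ^ d)"
    and principal_root_power_near_one: "principal_root d (w ^ d) = w"
proof -
  have "0 \<le> r"
    using w norm_ge_zero[of "w - 1"] by linarith
  then have "r \<le> real d * r"
    using d by (simp add: mult_le_cancel_right1)
  then have "r < 1"
    using dr by linarith
  then have "0 < Re w"
    using abs_Re_le_cmod[of "w - 1"] w by simp
  then have "w \<noteq> 0" by auto
  define z where "z = of_nat d * Ln w"
  have power: "w ^ d = exp z"
    using \<open>w \<noteq> 0\<close> by (simp add: z_def exp_of_nat_mult)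
  have Im_z: "\<bar>Im z\<bar> < pi / 2"
    using abs_of_nat_mult_Arg_less[OF w dr] by (simp add: z_def Arg_eq_Im_Ln[OF \<open>w \<noteq> 0\<close>])
  then show "0 < Re (w ^ d)"
    by (simp add: power Re_exp cos_gt_zero_pi abs_less_iff)
  have "Ln (w ^ d) = z"
    unfolding power using Im_z pi_gt_zero by (intro Ln_exp) (auto simp: abs_less_iff)
  then show "principal_root d (w ^ d) = w"
    using d \<open>w \<noteq> 0\<close> by (simp add: principal_root_def z_def)
qed

lemma convex_on_norm_exp_diff_one_sq:
  fixes x y :: complex
  assumes near: "\<And>w. w \<in> closed_segment x y \<Longrightarrow> 2 * cmod (exp w - 1) \<le> 1"
  shows "convex_on {0..1} (\<lambda>t. (cmod (exp ((1 - t) *\<^sub>R x + t *\<^sub>R y) - 1))^2)"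
proof (rule convex_on_norm_diff_one_sq_segment[where \<mu> = "\<lambda>_. 1" and k = 1])
  fix w assume "w \<in> closed_segment x y"
  show "(exp has_field_derivative 1 * exp w) (at w)"
    by (auto intro!: derivative_eq_intros)
  show "((\<lambda>_. 1) has_field_derivative (1 - 1) * 1^2) (at w)"
    by simp
  have "1 \<le> cmod (exp w) + cmod (exp w - 1)"
    using norm_triangle_ineq4[of "exp w" "exp w - 1"] by simp
  then show "cmod 1 * cmod (exp w - 1) \<le> cmod (exp w)"
    using near[OF \<open>w \<in> closed_segment x y\<close>] by simp
qed

lemma convex_on_norm_principal_root_diff_one_sq:
  fixes x y :: complex
  assumes d: "d \<noteq> 0" and x: "0 < Re x" and y: "0 < Re y"
    and near: "\<And>w. w \<in> closed_segment x y \<Longrightarrow> real d * cmod (principal_root d w - 1) \<le> 1"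
  shows "convex_on {0..1} (\<lambda>t. (cmod (principal_root d ((1 - t) *\<^sub>R x + t *\<^sub>R y) - 1))^2)"
proof (rule convex_on_norm_diff_one_sq_segment[where \<mu> = "\<lambda>w. 1 / (of_nat d * w)" and k = "1 - of_nat d"])
  fix w assume w: "w \<in> closed_segment x y"
  have "0 < Re w"
    using closed_segment_subset[OF _ _ convex_halfspace_Re_gt[of 0]] x y w by auto
  then have "w \<notin> \<real>\<^sub>\<le>\<^sub>0" "w \<noteq> 0"
    by (auto simp: complex_nonpos_Reals_iff)
  show "(principal_root d has_field_derivative 1 / (of_nat d * w) * principal_root d w) (at w)"
    using has_field_derivative_principal_root[OF \<open>w \<notin> \<real>\<^sub>\<le>\<^sub>0\<close> d] by simp
  have "((\<lambda>w. 1 / (of_nat d * w)) has_field_derivative - (of_nat d / (of_nat d * w)^2)) (at w)"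
    using d \<open>w \<noteq> 0\<close> by (auto intro!: derivative_eq_intros simp: power2_eq_square)
  then show "((\<lambda>w. 1 / (of_nat d * w)) has_field_derivative (1 - of_nat d - 1) * (1 / (of_nat d * w))^2) (at w)"
    by (simp add: power_divide)
  have k: "cmod (1 - of_nat d :: complex) = real d - 1"
  proof -
    have "(1 - of_nat d :: complex) = - of_real (real d - 1)" by simp
    then show ?thesis using d by (simp only: norm_minus_cancel norm_of_real)
  qed
  moreover have "1 \<le> cmod (principal_root d w) + cmod (principal_root d w - 1)"
    using norm_triangle_ineq4[of "principal_root d w" "principal_root d w - 1"] by simp
  ultimately show "cmod (1 - of_nat d :: complex) * cmod (principal_root d w - 1) \<le> cmod (principal_root d w)"
    unfolding k left_diff_distrib using near[OF w] by linarith
qed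

lemma Ln_ball_one_eq:
  assumes "r \<le> 1"
  shows "Ln ` ball 1 r = {z. \<bar>Im z\<bar> < pi / 2 \<and> exp z \<in> ball 1 r}"
proof (intro equalityI subsetI)
  fix z assume "z \<in> Ln ` ball 1 r"
  then obtain w where w: "w \<in> ball 1 r" "z = Ln w" by blast
  then have "0 < Re w" using Re_pos_if_in_ball_one assms by blast
  then have "w \<noteq> 0" by auto
  then show "z \<in> {z. \<bar>Im z\<bar> < pi / 2 \<and> exp z \<in> ball 1 r}"
    using Arg_Re_pos[of w] \<open>0 < Re w\<close> w by (simp add: Arg_eq_Im_Ln)
next
  fix z assume z: "z \<in> {z. \<bar>Im z\<bar> < pi / 2 \<and> exp z \<in> ball 1 r}"
  then have "Ln (exp z) = z"
    using pi_gt_zero by (intro Ln_exp) (auto simp: abs_less_iff)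
  then show "z \<in> Ln ` ball 1 r"
    using z by (metis (no_types, lifting) image_eqI mem_Collect_eq)
qed

lemma convex_Ln_ball_one:
  assumes r: "0 < r" "r \<le> 1/2"
  shows "convex (Ln ` ball 1 r)"
proof -
  define U where "U = {z :: complex. \<bar>Im z\<bar> < pi / 2}"
  define \<Phi> where "\<Phi> z = (cmod (exp z - 1))^2" for z
  have eq: "Ln ` ball 1 r = {z \<in> U. \<Phi> z < r^2}"
    using r by (auto simp: Ln_ball_one_eq U_def \<Phi>_def dist_norm norm_minus_commute power2_less_power2_iff_less)
  have U_eq: "U = {z. Im z < pi / 2} \<inter> {z. - (pi / 2) < Im z}"
    by (auto simp: U_def abs_less_iff)
  have "convex U"
    unfolding U_eq by (intro convex_Int convex_halfspace_Im_lt convex_halfspace_Im_gt)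
  moreover have "continuous_on U \<Phi>"
    unfolding \<Phi>_def by (intro continuous_intros)
  moreover have "w \<notin> \<real>\<^sub>\<le>\<^sub>0" if "w \<in> ball 1 r" for w :: complex
    using Re_pos_if_in_ball_one[OF that] r by (auto simp: complex_nonpos_Reals_iff)
  then have "path_connected (Ln ` ball 1 r)"
    by (intro path_connected_continuous_image continuous_on_Ln continuous_on_id
        convex_imp_path_connected convex_ball) auto
  moreover have "convex_on {0..1} (\<lambda>t. \<Phi> ((1 - t) *\<^sub>R x + t *\<^sub>R y))"
    if "\<forall>t\<in>{0..1}. \<Phi> ((1 - t) *\<^sub>R x + t *\<^sub>R y) \<le> r^2" for x y
    unfolding \<Phi>_def
  proof (rule convex_on_norm_exp_diff_one_sq)
    fix w assume "w \<in> closed_segment x y"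
    then have "(cmod (exp w - 1))^2 \<le> r^2"
      using that by (auto simp: closed_segment_def \<Phi>_def)
    then show "2 * cmod (exp w - 1) \<le> 1"
      using r by (simp add: power2_le_iff_abs_le)
  qed
  ultimately show ?thesis
    unfolding eq by (intro convex_sublevel_by_continuation) auto
qed

lemma convex_power_image_ball_one:
  assumes r: "0 < r" and dr: "real d * r < 1"
  shows "convex ((\<lambda>w. w ^ d) ` ball (1 :: complex) r)"
proof (cases "d = 0")
  case True
  then have "(\<lambda>w. w ^ d) ` ball (1 :: complex) r = {1}"
    using r by (simp add: image_constant_conv)
  then show ?thesis
    by (simp only: convex_singleton)
next
  case d: False
  define U where "U = {p :: complex. 0 < Re p}"
  define \<Phi> where "\<Phi> p = (cmod (principal_root d p - 1))^2" for p
  have U_nonpos: "p \<notin> \<real>\<^sub>\<le>\<^sub>0" if "p \<in> U" for p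
    using that by (auto simp: U_def complex_nonpos_Reals_iff)
  have eq: "(\<lambda>w. w ^ d) ` ball 1 r = {p \<in> U. \<Phi> p < r^2}"
  proof (intro equalityI subsetI)
    fix p :: complex assume "p \<in> (\<lambda>w. w ^ d) ` ball 1 r"
    then obtain w where "w \<in> ball 1 r" "p = w ^ d" by blast
    moreover from this have "cmod (w - 1) < r"
      by (simp add: dist_norm norm_minus_commute)
    ultimately show "p \<in> {p \<in> U. \<Phi> p < r^2}"
      using Re_power_gt_zero_near_one principal_root_power_near_one dr d r
      by (auto simp: U_def \<Phi>_def power2_less_power2_iff_less)
  next
    fix p :: complex assume p: "p \<in> {p \<in> U. \<Phi> p < r^2}"
    then have "p \<noteq> 0" by (auto simp: U_def)
    then have "p = principal_root d p ^ d"
      using d by (simp add: power_principal_root)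
    moreover have "principal_root d p \<in> ball 1 r"
      using p r by (simp add: \<Phi>_def dist_norm norm_minus_commute power2_less_power2_iff_less)
    ultimately show "p \<in> (\<lambda>w. w ^ d) ` ball 1 r" by blast
  qed
  have "convex U"
    unfolding U_def by (rule convex_halfspace_Re_gt)
  moreover have "continuous_on U \<Phi>"
    unfolding \<Phi>_def principal_root_def using U_nonpos d by (intro continuous_intros) auto
  moreover have "path_connected ((\<lambda>w. w ^ d) ` ball (1 :: complex) r)"
    by (intro path_connected_continuous_image continuous_intros convex_imp_path_connected convex_ball)
  moreover have "convex_on {0..1} (\<lambda>t. \<Phi> ((1 - t) *\<^sub>R x + t *\<^sub>R y))"
    if "x \<in> U" "y \<in> U" "\<forall>t\<in>{0..1}. \<Phi> ((1 - t) *\<^sub>R x + t *\<^sub>R y) \<le> r^2" for x y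
    unfolding \<Phi>_def
  proof (rule convex_on_norm_principal_root_diff_one_sq[OF d])
    show "0 < Re x" "0 < Re y" using that by (auto simp: U_def)
    fix w assume "w \<in> closed_segment x y"
    then have "(cmod (principal_root d w - 1))^2 \<le> r^2"
      using that by (auto simp: closed_segment_def \<Phi>_def)
    then have "cmod (principal_root d w - 1) \<le> r"
      using r by (simp add: power2_le_iff_abs_le)
    then show "real d * cmod (principal_root d w - 1) \<le> 1"
      using dr mult_left_mono[of _ r "real d"] by fastforce
  qed
  ultimately show ?thesis
    unfolding eq by (intro convex_sublevel_by_continuation) auto
qed

lemma disk_pow_one_eq_power_image:
  assumes r: "0 < r" and dr: "real d * r < 1"
  shows "disk_pow 1 r d = (\<lambda>w. w ^ d) ` ball 1 r"
proof (intro equalityI subsetI)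
  fix z :: complex assume "z \<in> (\<lambda>w. w ^ d) ` ball 1 r"
  then obtain w where "w \<in> ball 1 r" "z = (\<Prod>i<d. w)" by auto
  then show "z \<in> disk_pow 1 r d"
    unfolding disk_pow_def by blast
next
  fix z assume "z \<in> disk_pow 1 r d"
  then obtain b where z: "z = (\<Prod>i<d. b i)" and b: "\<And>i. i < d \<Longrightarrow> b i \<in> ball 1 r"
    unfolding disk_pow_def by blast
  consider "d = 0" | "d = 1" | "2 \<le> d" by linarith
  then show "z \<in> (\<lambda>w. w ^ d) ` ball 1 r"
  proof cases
    case 1
    then show ?thesis using z r by (auto intro!: image_eqI[of _ _ 1])
  next
    case 2
    then show ?thesis using z b by (auto intro!: image_eqI[of _ _ "b 0"])
  next
    case 3
    then have "2 * r \<le> real d * r"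
      using r by (intro mult_right_mono) auto
    then have "r \<le> 1/2" using dr by linarith
    have b0: "b i \<noteq> 0" if "i < d" for i
      using Re_pos_if_in_ball_one[OF b[OF that]] \<open>r \<le> 1/2\<close> by auto
    have "(\<Sum>i<d. (1 / real d) *\<^sub>R Ln (b i)) \<in> Ln ` ball 1 r"
      using 3 b by (intro convex_sum convex_Ln_ball_one r \<open>r \<le> 1/2\<close>) auto
    then obtain w where w: "w \<in> ball 1 r" "(\<Sum>i<d. (1 / real d) *\<^sub>R Ln (b i)) = Ln w"
      by blast
    then have "w \<noteq> 0" using Re_pos_if_in_ball_one \<open>r \<le> 1/2\<close> by fastforce
    have "w ^ d = exp (of_nat d * Ln w)"
      using \<open>w \<noteq> 0\<close> by (simp add: exp_of_nat_mult)
    also have "of_nat d * Ln w = (\<Sum>i<d. Ln (b i))"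
      using 3 by (simp add: w(2)[symmetric] sum_distrib_left scaleR_conv_of_real)
    also have "exp \<dots> = z"
      using b0 by (simp add: z exp_sum)
    finally show ?thesis using w by blast
  qed
qed

theorem lemma2p4:
  fixes d :: nat and r :: real
  assumes "0 < r" and "r < 1 / real d"
  shows "convex (disk_pow 1 r d)"
proof -
  have "d \<noteq> 0"
    using assms by (intro notI) simp
  then have "real d * r < 1"
    using assms by (simp add: field_simps)
  then show ?thesis
    using assms(1) by (simp add: disk_pow_one_eq_power_image convex_power_image_ball_one)
qed

end
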